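(* Let $m,n$ be positive integers and $j$ a non-negative integer such that $m\leq n$ and $j<n$. Then \begin{align*} |\mathrm{WHom}^{j}(P_m,P_n)| =&\sum_{t=j+1}^{j+\left\lfloor \frac{m-j-1}{2}\right\rfloor}\ \sum_{s=t-j}^{m-1-t}\left[\binom{m-1}{s,\,t,\,m-1-s-t} - \binom{m-1}{t-j-1,\,s+j+1,\,m-1-s-t}\right]\\ &+\sum_{t=\max\{j-n+m+1,0\}}^{j}\ \sum_{s=0}^{m-1-t}\binom{m-1}{s,\,t,\,m-1-s-t}+\sum_{t=0}^{j-n+m}\ \sum_{s=0}^{n-j-1}\binom{m-1}{s,\,t,\,m-1-s-t}\\ &+\sum_{t=n-j}^{n-j-1+\left\lfloor\frac{j-n+m}{2}\right\rfloor}\ \sum_{s=t-(n-j-1)}^{m-1-t}\left[\binom{m-1}{s,\,t,\,m-1-s-t} - \binom{m-1}{t-n+j,\,s+n-j,\,m-1-s-t}\right]. \end{align*}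
   Context: For a positive integer $n$, $P_n$ denotes the path with vertex set $\{0,1,\dots,n-1\}$ and edge set $\{\{i,i+1\} : i=0,\dots,n-2\}$. A weak homomorphism from a graph $G$ to a graph $H$ is a map $f:V(G)\to V(H)$ such that for every edge $\{x,y\}\in E(G)$, either $f(x)=f(y)$ or $\{f(x),f(y)\}\in E(H)$. $\mathrm{WHom}^{j}(P_m,P_n)$ denotes the set of weak homomorphisms $f:P_m\to P_n$ with $f(0)=j$. The multinomial coefficient $\binom{N}{a,b,c}$ equals $\frac{N!}{a!\,b!\,c!}$ when $a,b,c\ge 0$ and $a+b+c=N$, and is $0$ if any of $a,b,c$ is negative. A sum whose upper limit is smaller than its lower limit is zero. *)

theory Defs
  imports Main "HOL-Library.FuncSet"
begin

definition path_verts :: "nat \<Rightarrow> nat set" where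
  "path_verts n = {0..<n}"

definition path_edges :: "nat \<Rightarrow> nat set set" where
  "path_edges n = {{i, Suc i} | i. Suc i < n}"

text \<open>Weak homomorphism between graphs given by vertex and edge sets;
  maps are taken extensional (undefined outside the vertex set) so that
  they are identified with maps V(G) to V(H).\<close>
definition weak_hom :: "'a set \<Rightarrow> 'a set set \<Rightarrow> 'b set \<Rightarrow> 'b set set \<Rightarrow> ('a \<Rightarrow> 'b) \<Rightarrow> bool" where
  "weak_hom VG EG VH EH f \<longleftrightarrow> f \<in> VG \<rightarrow>\<^sub>E VH \<and>
     (\<forall>x y. {x, y} \<in> EG \<longrightarrow> f x = f y \<or> {f x, f y} \<in> EH)"

definition WHom :: "nat \<Rightarrow> nat \<Rightarrow> nat \<Rightarrow> (nat \<Rightarrow> nat) set" where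
  "WHom j m n = {f. weak_hom (path_verts m) (path_edges m) (path_verts n) (path_edges n) f \<and> f 0 = j}"

definition multinom :: "int \<Rightarrow> int \<Rightarrow> int \<Rightarrow> int \<Rightarrow> int" where
  "multinom N a b c = (if a \<ge> 0 \<and> b \<ge> 0 \<and> c \<ge> 0 \<and> a + b + c = N
     then fact (nat N) div (fact (nat a) * fact (nat b) * fact (nat c)) else 0)"

end

theory Submission
  imports Defs
begin

text \<open>A weak homomorphism P_m \<rightarrow> P_n starting at j is a walk of k = m - 1 steps in {-1, 0, +1}
  that stays in {0..n-1}. Walks with u up-steps and d down-steps are counted by the trinomial
  coefficient of (u, d, k - u - d), and the reflection principle at -1 and at n removes those that
  leave the strip; since k < n, no walk can leave on both sides, so one reflection per side suffices.
  This reflection formula and the walk count satisfy the same first-step recurrence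
  f (k+1) x = f k (x-1) + f k x + f k (x+1) with the same initial and boundary values. Splitting the
  (u, d)-range according to which reflection term can be nonzero gives the four sums.\<close>

definition trinomial :: "nat \<Rightarrow> nat \<Rightarrow> nat \<Rightarrow> nat" where
  "trinomial a b c = fact (a + b + c) div (fact a * fact b * fact c)"

lemma trinomial_mult_fact: "trinomial a b c * (fact a * fact b * fact c) = fact (a + b + c)"
proof -
  have "fact (a + b + c) = fact a * fact (b + c) * (a + b + c choose a)"
    using binomial_fact_lemma[of a "a + b + c"] by (simp add: ac_simps)
  also have "fact (b + c) = fact b * fact c * (b + c choose b)"
    using binomial_fact_lemma[of b "b + c"] by (simp add: ac_simps)
  finally have "fact (a + b + c) =
      (fact a * fact b * fact c) * ((a + b + c choose a) * (b + c choose b))"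
    by (simp add: ac_simps)
  then show ?thesis
    unfolding trinomial_def
    by (metis fact_nonzero mult.commute mult_eq_0_iff nonzero_mult_div_cancel_left)
qed

lemma trinomial_commute: "trinomial a b c = trinomial b a c"
  unfolding trinomial_def by (simp add: ac_simps)

lemma trinomial_commute_right: "trinomial a b c = trinomial a c b"
  unfolding trinomial_def by (simp add: ac_simps)

lemma trinomial_pred_mult_fact:
  assumes "a + b + c = Suc k"
  shows "(if a > 0 then trinomial (a - 1) b c else 0) * (fact a * fact b * fact c) = a * fact k"
proof (cases a)
  case (Suc a')
  then show ?thesis
    using trinomial_mult_fact[of a' b c] assms by (simp add: algebra_simps)
qed simp

lemma trinomial_Suc:
  assumes "a + b + c = Suc k"
  shows "trinomial a b c = (if a > 0 then trinomial (a - 1) b c else 0)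
    + (if b > 0 then trinomial a (b - 1) c else 0) + (if c > 0 then trinomial a b (c - 1) else 0)"
proof -
  let ?P = "fact a * fact b * fact c :: nat"
  have "(if b > 0 then trinomial a (b - 1) c else 0) * ?P = b * fact k"
    using trinomial_pred_mult_fact[of b a c k] assms trinomial_commute[of a "b - 1" c]
    by (auto simp: ac_simps split: if_split_asm)
  moreover have "(if c > 0 then trinomial a b (c - 1) else 0) * ?P = c * fact k"
    using trinomial_pred_mult_fact[of c a b k] assms trinomial_commute[of "c - 1" a b]
      trinomial_commute_right[of a "c - 1" b] by (auto simp: ac_simps split: if_split_asm)
  ultimately have "((if a > 0 then trinomial (a - 1) b c else 0)
      + (if b > 0 then trinomial a (b - 1) c else 0) + (if c > 0 then trinomial a b (c - 1) else 0)) * ?P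
      = (a + b + c) * fact k"
    using trinomial_pred_mult_fact[OF assms] by (simp add: algebra_simps)
  also have "\<dots> = fact (a + b + c)"
    using assms by simp
  finally show ?thesis
    using trinomial_mult_fact[of a b c] by (metis fact_nonzero mult_cancel_right mult_eq_0_iff)
qed

definition trinom :: "nat \<Rightarrow> int \<Rightarrow> int \<Rightarrow> int" where
  "trinom k a b = multinom (int k) a b (int k - a - b)"

lemma trinom_of_nat: "a + b + c = k \<Longrightarrow> trinom k (int a) (int b) = int (trinomial a b c)"
  by (auto simp: trinom_def multinom_def trinomial_def zdiv_int nat_diff_distrib)

lemma trinom_eq_0: "a < 0 \<or> b < 0 \<or> int k < a + b \<Longrightarrow> trinom k a b = 0"
  by (auto simp: trinom_def multinom_def)

lemma int_composition_cases:
  assumes "0 \<le> a" "0 \<le> b" "a + b \<le> int k"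
  obtains a' b' c' where "a = int a'" "b = int b'" "a' + b' + c' = k"
  by (rule that[of "nat a" "nat b" "k - nat a - nat b"]) (use assms in auto)

lemma trinom_commute: "trinom k a b = trinom k b a"
proof (cases "0 \<le> a \<and> 0 \<le> b \<and> a + b \<le> int k")
  case True
  then obtain a' b' c' where "a = int a'" "b = int b'" "a' + b' + c' = k"
    using int_composition_cases by blast
  then show ?thesis
    using trinom_of_nat[of a' b' c'] trinom_of_nat[of b' a' c']
    by (simp add: trinomial_commute ac_simps)
qed (auto simp: trinom_eq_0)

lemma trinom_0: "trinom 0 a b = (if a = 0 \<and> b = 0 then 1 else 0)"
  by (auto simp: trinom_def multinom_def)

lemma trinom_Suc: "trinom (Suc k) a b = trinom k (a - 1) b + trinom k a b + trinom k a (b - 1)"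
proof (cases "0 \<le> a \<and> 0 \<le> b \<and> a + b \<le> int (Suc k)")
  case True
  then obtain a' b' c' where ab: "a = int a'" "b = int b'" and abc: "a' + b' + c' = Suc k"
    using int_composition_cases by blast
  have "trinom k (a - 1) b = (if a' > 0 then int (trinomial (a' - 1) b' c') else 0)"
    using ab abc trinom_of_nat[of "a' - 1" b' c' k] by (cases a') (auto simp: trinom_eq_0)
  moreover have "trinom k a (b - 1) = (if b' > 0 then int (trinomial a' (b' - 1) c') else 0)"
    using ab abc trinom_of_nat[of a' "b' - 1" c' k] by (cases b') (auto simp: trinom_eq_0)
  moreover have "trinom k a b = (if c' > 0 then int (trinomial a' b' (c' - 1)) else 0)"
    using ab abc trinom_of_nat[of a' b' "c' - 1" k] by (cases c') (auto simp: trinom_eq_0)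
  ultimately show ?thesis
    using ab abc trinom_of_nat[OF abc] trinomial_Suc[OF abc] by simp
qed (auto simp: trinom_eq_0)

text \<open>Reflection principle: among the k-step walks from x with u up-steps and d down-steps, those
  touching -1 correspond to walks from -2 - x, and those touching n to walks from 2n - x; the
  subtracted terms count these, with arguments (down-steps, up-steps) of the reflected walk.\<close>
definition refl_count :: "nat \<Rightarrow> nat \<Rightarrow> int \<Rightarrow> int \<Rightarrow> int \<Rightarrow> int" where
  "refl_count n k x u d = (if 0 \<le> x + u - d \<and> x + u - d < int n then
     trinom k u d - trinom k (d - x - 1) (u + x + 1) - trinom k (d + int n - x) (u - int n + x)
   else 0)"

lemma refl_count_Suc:
  "refl_count n (Suc k) x u d = refl_count n k (x + 1) (u - 1) d + refl_count n k x u d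
     + refl_count n k (x - 1) u (d - 1)"
proof -
  have "trinom (Suc k) (d - x - 1) (u + x + 1) = trinom k (d - (x + 1) - 1) (u - 1 + (x + 1) + 1)
     + trinom k (d - x - 1) (u + x + 1) + trinom k (d - 1 - (x - 1) - 1) (u + (x - 1) + 1)"
    by (simp add: trinom_Suc algebra_simps)
  moreover have "trinom (Suc k) (d + int n - x) (u - int n + x)
     = trinom k (d + int n - (x + 1)) (u - 1 - int n + (x + 1))
     + trinom k (d + int n - x) (u - int n + x)
     + trinom k (d - 1 + int n - (x - 1)) (u - int n + (x - 1))"
    by (simp add: trinom_Suc algebra_simps)
  ultimately show ?thesis
    unfolding refl_count_def trinom_Suc[of k u d] by (simp add: algebra_simps)
qed

text \<open>For k < n the square [0, n] \<times> [0, n] contains every (u, d) with u + d \<le> k.\<close>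
definition refl_total :: "nat \<Rightarrow> nat \<Rightarrow> int \<Rightarrow> int" where
  "refl_total n k x = (\<Sum>d\<in>{0..int n}. \<Sum>u\<in>{0..int n}. refl_count n k x u d)"

lemma refl_total_0:
  assumes "0 \<le> x" "x < int n"
  shows "refl_total n 0 x = 1"
proof -
  have "refl_count n 0 x u d = (if u = 0 then if d = 0 then 1 else 0 else 0)" for u d
    using assms by (simp add: refl_count_def trinom_0)
  then show ?thesis
    using assms by (simp add: refl_total_def)
qed

lemma refl_total_minus_one: "refl_total n k (-1) = 0"
  by (auto simp: refl_total_def refl_count_def trinom_eq_0 trinom_commute[of k u d for u d]
      intro!: sum.neutral)

lemma refl_total_n: "refl_total n k (int n) = 0"
  by (auto simp: refl_total_def refl_count_def trinom_eq_0 trinom_commute[of k u d for u d]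
      intro!: sum.neutral)

lemma sum_shift_pred_int:
  fixes g :: "int \<Rightarrow> 'a::comm_monoid_add"
  assumes "0 \<le> N" "g (-1) = 0" "g N = 0"
  shows "(\<Sum>u\<in>{0..N}. g (u - 1)) = (\<Sum>u\<in>{0..N}. g u)"
proof -
  have "(\<Sum>u\<in>{0..N}. g (u - 1)) = (\<Sum>v\<in>{-1..N - 1}. g v)"
    by (rule sum.reindex_bij_witness[of _ "\<lambda>v. v + 1" "\<lambda>u. u - 1"]) auto
  also have "\<dots> = (\<Sum>v\<in>insert (-1) {0..N - 1}. g v)"
    using assms by (intro sum.cong) auto
  also have "\<dots> = (\<Sum>v\<in>insert N {0..N - 1}. g v)"
    using assms by simp
  also have "\<dots> = (\<Sum>u\<in>{0..N}. g u)"
    using assms by (intro sum.cong) auto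
  finally show ?thesis .
qed

lemma refl_total_Suc:
  assumes "k < n" "0 \<le> x" "x < int n"
  shows "refl_total n (Suc k) x =
    refl_total n k (x - 1) + refl_total n k x + refl_total n k (x + 1)"
proof -
  have up: "(\<Sum>u\<in>{0..int n}. refl_count n k (x + 1) (u - 1) d) =
      (\<Sum>u\<in>{0..int n}. refl_count n k (x + 1) u d)" if "0 \<le> d" for d
    using assms that by (intro sum_shift_pred_int) (auto simp: refl_count_def trinom_eq_0)
  have down: "(\<Sum>d\<in>{0..int n}. \<Sum>u\<in>{0..int n}. refl_count n k (x - 1) u (d - 1)) =
      refl_total n k (x - 1)"
    unfolding refl_total_def using assms
    by (intro sum_shift_pred_int) (auto simp: refl_count_def trinom_eq_0 intro!: sum.neutral)
  show ?thesis
    unfolding refl_total_def refl_count_Suc sum.distrib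
    using up down by (simp add: refl_total_def)
qed

definition weak_adj :: "nat \<Rightarrow> nat \<Rightarrow> bool" where
  "weak_adj a b \<longleftrightarrow> b = a \<or> b = Suc a \<or> a = Suc b"

lemma path_edges_iff:
  "{a, b} \<in> path_edges n \<longleftrightarrow> (b = Suc a \<and> Suc a < n) \<or> (a = Suc b \<and> Suc b < n)"
  unfolding path_edges_def by (auto simp: doubleton_eq_iff)

lemma WHom_iff:
  "f \<in> WHom j m n \<longleftrightarrow> f \<in> {0..<m} \<rightarrow>\<^sub>E {0..<n} \<and> f 0 = j \<and>
     (\<forall>i. Suc i < m \<longrightarrow> weak_adj (f i) (f (Suc i)))"
proof -
  have "(\<forall>x y. {x, y} \<in> path_edges m \<longrightarrow> f x = f y \<or> {f x, f y} \<in> path_edges n) \<longleftrightarrow>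
        (\<forall>i. Suc i < m \<longrightarrow> weak_adj (f i) (f (Suc i)))" if "f \<in> {0..<m} \<rightarrow>\<^sub>E {0..<n}"
    using that unfolding path_edges_iff weak_adj_def
    by (auto simp: PiE_def Pi_def) (metis Suc_lessD)+
  then show ?thesis
    unfolding WHom_def weak_hom_def path_verts_def by blast
qed

lemma finite_WHom: "finite (WHom j m n)"
  by (rule finite_subset[of _ "{0..<m} \<rightarrow>\<^sub>E {0..<n}"])
    (use WHom_iff in blast, simp add: finite_PiE)

lemma card_WHom_1: "j < n \<Longrightarrow> card (WHom j 1 n) = 1"
proof -
  assume "j < n"
  then have "WHom j 1 n = {\<lambda>i. if i = 0 then j else undefined}"
    by (auto simp: WHom_iff PiE_def extensional_def fun_eq_iff)
  then show ?thesis by simp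
qed

lemma card_WHom_second_value:
  assumes "j < n"
  shows "card {f \<in> WHom j (Suc (Suc k)) n. f 1 = y} =
    (if weak_adj j y then card (WHom y (Suc k) n) else 0)"
proof (cases "weak_adj j y")
  case False
  then have "{f \<in> WHom j (Suc (Suc k)) n. f 1 = y} = {}"
    by (auto simp: WHom_iff)
  then show ?thesis using False by (metis card.empty)
next
  case True
  let ?A = "{f \<in> WHom j (Suc (Suc k)) n. f 1 = y}"
  define tail :: "(nat \<Rightarrow> nat) \<Rightarrow> nat \<Rightarrow> nat" where
    "tail f = restrict (f \<circ> Suc) {0..<Suc k}" for f
  define cons :: "(nat \<Rightarrow> nat) \<Rightarrow> nat \<Rightarrow> nat" where
    "cons g = restrict (\<lambda>i. if i = 0 then j else g (i - 1)) {0..<Suc (Suc k)}" for g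
  have "bij_betw tail ?A (WHom y (Suc k) n)"
  proof (rule bij_betw_byWitness[where f' = cons])
    show "\<forall>f\<in>?A. cons (tail f) = f"
      by (auto simp: cons_def tail_def WHom_iff PiE_def extensional_def fun_eq_iff
          gr0_conv_Suc)
    show "\<forall>g\<in>WHom y (Suc k) n. tail (cons g) = g"
      by (auto simp: cons_def tail_def WHom_iff PiE_def extensional_def fun_eq_iff)
    show "tail ` ?A \<subseteq> WHom y (Suc k) n"
      by (auto simp: tail_def WHom_iff PiE_def Pi_def)
    show "cons ` WHom y (Suc k) n \<subseteq> ?A"
    proof
      fix f assume "f \<in> cons ` WHom y (Suc k) n"
      then obtain g where g: "g \<in> WHom y (Suc k) n" and f: "f = cons g" by blast
      have "weak_adj (f i) (f (Suc i))" if "Suc i < Suc (Suc k)" for i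
        using g True that by (cases i) (auto simp: f cons_def WHom_iff)
      moreover have "f \<in> {0..<Suc (Suc k)} \<rightarrow>\<^sub>E {0..<n}"
        using g assms by (auto simp: f cons_def WHom_iff PiE_def Pi_def)
      ultimately show "f \<in> ?A"
        using g by (auto simp: f cons_def WHom_iff)
    qed
  qed
  then show ?thesis
    using True by (simp add: bij_betw_same_card)
qed

lemma card_WHom_Suc_Suc:
  assumes "j < n"
  shows "card (WHom j (Suc (Suc k)) n) = (\<Sum>y\<in>{y. weak_adj j y}. card (WHom y (Suc k) n))"
proof -
  have fin: "finite {y. weak_adj j y}"
    by (rule finite_subset[of _ "{..Suc j}"]) (auto simp: weak_adj_def)
  have "weak_adj j (f 1)" if "f \<in> WHom j (Suc (Suc k)) n" for f
    using that unfolding WHom_iff One_nat_def by blast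
  then have "WHom j (Suc (Suc k)) n =
      (\<Union>y\<in>{y. weak_adj j y}. {f \<in> WHom j (Suc (Suc k)) n. f 1 = y})"
    by blast
  also have "card \<dots> =
      (\<Sum>y\<in>{y. weak_adj j y}. card {f \<in> WHom j (Suc (Suc k)) n. f 1 = y})"
    by (rule card_UN_disjoint[OF fin]) (simp_all add: finite_WHom, blast)
  also have "\<dots> = (\<Sum>y\<in>{y. weak_adj j y}. card (WHom y (Suc k) n))"
    by (rule sum.cong[OF refl])
      (simp only: card_WHom_second_value[OF assms] mem_Collect_eq if_True)
  finally show ?thesis .
qed

lemma WHom_empty_if_start_ge: "n \<le> j \<Longrightarrow> WHom j (Suc k) n = {}"
  using PiE_mem[of _ "{0..<Suc k}" "\<lambda>_. {0..<n}" 0] by (fastforce simp: WHom_iff)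

text \<open>The parameter k counts steps, so the domain is P_(k+1); the count is extended by 0 to all
  integer starting points.\<close>
definition walk_count :: "nat \<Rightarrow> nat \<Rightarrow> int \<Rightarrow> int" where
  "walk_count n k x = (if 0 \<le> x then int (card (WHom (nat x) (Suc k) n)) else 0)"

lemma walk_count_of_nat: "walk_count n k (int y) = int (card (WHom y (Suc k) n))"
  by (simp add: walk_count_def)

lemma walk_count_0: "0 \<le> x \<Longrightarrow> x < int n \<Longrightarrow> walk_count n 0 x = 1"
  using card_WHom_1[of "nat x" n] by (simp add: walk_count_def)

lemma walk_count_minus_one: "walk_count n k (-1) = 0"
  by (simp add: walk_count_def)

lemma walk_count_n: "walk_count n k (int n) = 0"
  by (simp add: walk_count_def WHom_empty_if_start_ge)

lemma walk_count_Suc: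
  assumes "0 \<le> x" "x < int n"
  shows "walk_count n (Suc k) x =
    walk_count n k (x - 1) + walk_count n k x + walk_count n k (x + 1)"
proof -
  obtain j where x: "x = int j" and "j < n"
    using assms by (metis nonneg_int_cases of_nat_less_iff)
  then have "walk_count n (Suc k) x = (\<Sum>y\<in>{y. weak_adj j y}. int (card (WHom y (Suc k) n)))"
    by (simp add: walk_count_def card_WHom_Suc_Suc)
  also have "\<dots> = walk_count n k (x - 1) + walk_count n k x + walk_count n k (x + 1)"
  proof (cases j)
    case 0
    then have "{y. weak_adj j y} = {0, 1}"
      by (auto simp: weak_adj_def)
    then show ?thesis
      using x 0 walk_count_of_nat[of n k 1] by (simp add: walk_count_def)
  next
    case (Suc i)
    then have "{y. weak_adj j y} = {i, j, Suc j}"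
      by (auto simp: weak_adj_def)
    moreover have "x - 1 = int i" "x + 1 = int (Suc j)"
      using x Suc by auto
    ultimately show ?thesis
      using x Suc by (simp only: walk_count_of_nat) simp
  qed
  finally show ?thesis .
qed

lemma walk_count_eq_refl_total:
  assumes "k < n" "0 \<le> x" "x < int n"
  shows "walk_count n k x = refl_total n k x"
  using assms
proof (induction k arbitrary: x)
  case 0
  then show ?case by (simp add: walk_count_0 refl_total_0)
next
  case (Suc k)
  have IH: "walk_count n k y = refl_total n k y" if "-1 \<le> y" "y \<le> int n" for y
    using Suc that walk_count_minus_one refl_total_minus_one walk_count_n refl_total_n
    by (cases "y = -1 \<or> y = int n") auto
  show ?case
    using Suc.prems IH[of "x - 1"] IH[of x] IH[of "x + 1"]
    by (simp add: walk_count_Suc refl_total_Suc)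
qed

lemma sum_nested_eq_sum_square:
  fixes h :: "int \<Rightarrow> int \<Rightarrow> 'a::comm_monoid_add"
  assumes "finite S" "(SIGMA t:{a..b}. {c t..e t}) \<subseteq> S \<times> S"
  shows "(\<Sum>t\<in>{a..b}. \<Sum>s\<in>{c t..e t}. h t s) =
    (\<Sum>t\<in>S. \<Sum>s\<in>S. if a \<le> t \<and> t \<le> b \<and> c t \<le> s \<and> s \<le> e t then h t s else 0)"
proof -
  have "(SIGMA t:{a..b}. {c t..e t}) = S \<times> S \<inter> {(t, s). a \<le> t \<and> t \<le> b \<and> c t \<le> s \<and> s \<le> e t}"
    using assms(2) by auto
  then show ?thesis
    using assms(1) by (simp add: sum.Sigma sum.cartesian_product sum.inter_restrict case_prod_unfold)
qed

text \<open>A is the direct term and B, C the reflection terms at -1 and n of refl_count; the hypotheses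
  record where they vanish.\<close>
lemma four_regions_split:
  fixes M N J u d A B C :: int
  assumes "0 \<le> J" "J < N" "M \<le> N" "0 \<le> u" "0 \<le> d"
    and "M \<le> u + d \<Longrightarrow> A = 0 \<and> B = 0 \<and> C = 0" "d \<le> J \<Longrightarrow> B = 0"
    and "u + J < N \<Longrightarrow> C = 0"
  shows "(if J + 1 \<le> d \<and> d \<le> J + (M - J - 1) div 2 \<and> d - J \<le> u \<and> u \<le> M - 1 - d
       then A - B else 0)
    + (if max (J - N + M + 1) 0 \<le> d \<and> d \<le> J \<and> 0 \<le> u \<and> u \<le> M - 1 - d then A else 0)
    + (if 0 \<le> d \<and> d \<le> J - N + M \<and> 0 \<le> u \<and> u \<le> N - J - 1 then A else 0)
    + (if N - J \<le> u \<and> u \<le> N - J - 1 + (J - N + M) div 2 \<and> u - (N - J - 1) \<le> d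
          \<and> d \<le> M - 1 - u
       then A - C else 0)
    = (if 0 \<le> J + u - d \<and> J + u - d < N then A - B - C else 0)"
  using assms by (auto simp: less_eq_div_iff_mult_less_eq)

lemma multinom_eq_trinom:
  assumes "a + b + c = int k"
  shows "multinom (int k) a b c = trinom k a b"
proof -
  have "c = int k - a - b"
    using assms by simp
  then show ?thesis
    by (simp add: trinom_def)
qed

lemma refl_count_eq_regions:
  fixes M N J u d :: int
  assumes "M = int k + 1" "N = int n" "M \<le> N" "0 \<le> J" "J < N" "0 \<le> u" "0 \<le> d"
  shows "refl_count n k J u d =
      (if J + 1 \<le> d \<and> d \<le> J + (M - J - 1) div 2 \<and> d - J \<le> u \<and> u \<le> M - 1 - d
       then multinom (M-1) u d (M-1-u-d) - multinom (M-1) (d-J-1) (u+J+1) (M-1-u-d) else 0)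
    + (if max (J - N + M + 1) 0 \<le> d \<and> d \<le> J \<and> 0 \<le> u \<and> u \<le> M - 1 - d
       then multinom (M-1) u d (M-1-u-d) else 0)
    + (if 0 \<le> d \<and> d \<le> J - N + M \<and> 0 \<le> u \<and> u \<le> N - J - 1
       then multinom (M-1) u d (M-1-u-d) else 0)
    + (if N - J \<le> u \<and> u \<le> N - J - 1 + (J - N + M) div 2 \<and> u - (N - J - 1) \<le> d
          \<and> d \<le> M - 1 - u
       then multinom (M-1) d u (M-1-d-u) - multinom (M-1) (u-N+J) (d+N-J) (M-1-d-u) else 0)"
proof -
  have K: "M - 1 = int k"
    using assms(1) by simp
  have "multinom (M-1) u d (M-1-u-d) = trinom k u d"
    "multinom (M-1) (d-J-1) (u+J+1) (M-1-u-d) = trinom k (d - J - 1) (u + J + 1)"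
    "multinom (M-1) d u (M-1-d-u) = trinom k u d"
    "multinom (M-1) (u-N+J) (d+N-J) (M-1-d-u) = trinom k (d + int n - J) (u - int n + J)"
    unfolding K assms(2)
    by (subst multinom_eq_trinom;
        simp add: trinom_commute[of k d] trinom_commute[of k "u - int n + J"])+
  then show ?thesis
    unfolding refl_count_def
    by (simp only: assms(2))
      (rule four_regions_split[symmetric], use assms K in \<open>auto simp: trinom_eq_0\<close>)
qed

theorem theorem2:
  fixes m n j :: nat
  assumes "0 < m" and "0 < n" and "m \<le> n" and "j < n"
  shows "int (card (WHom j m n)) =
    (let M = int m; N = int n; J = int j in
      (\<Sum>t\<in>{J+1 .. J + (M - J - 1) div 2}. \<Sum>s\<in>{t - J .. M - 1 - t}.
          multinom (M-1) s t (M-1-s-t) - multinom (M-1) (t-J-1) (s+J+1) (M-1-s-t))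
    + (\<Sum>t\<in>{max (J - N + M + 1) 0 .. J}. \<Sum>s\<in>{0 .. M - 1 - t}. multinom (M-1) s t (M-1-s-t))
    + (\<Sum>t\<in>{0 .. J - N + M}. \<Sum>s\<in>{0 .. N - J - 1}. multinom (M-1) s t (M-1-s-t))
    + (\<Sum>t\<in>{N - J .. N - J - 1 + (J - N + M) div 2}. \<Sum>s\<in>{t - (N - J - 1) .. M - 1 - t}.
          multinom (M-1) s t (M-1-s-t) - multinom (M-1) (t-N+J) (s+N-J) (M-1-s-t)))"
proof -
  obtain k where m: "m = Suc k"
    using assms(1) by (cases m) auto
  define M N J where "M = int m" and "N = int n" and "J = int j"
  have MNJ: "M = int k + 1" "M \<le> N" "0 \<le> J" "J < N"
    using assms m by (auto simp: M_def N_def J_def)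
  have card: "int (card (WHom j m n)) = refl_total n k J"
    using walk_count_eq_refl_total[of k n J] walk_count_of_nat[of n k j] assms m
    by (simp add: J_def)
  have fin: "finite {0..N}" by simp
  have R1: "(SIGMA t:{J + 1..J + (M - J - 1) div 2}. {t - J..M - 1 - t}) \<subseteq> {0..N} \<times> {0..N}"
    and R2: "(SIGMA t:{max (J - N + M + 1) 0..J}. {0..M - 1 - t}) \<subseteq> {0..N} \<times> {0..N}"
    and R3: "(SIGMA t:{0..J - N + M}. {0..N - J - 1}) \<subseteq> {0..N} \<times> {0..N}"
    and R4: "(SIGMA t:{N - J..N - J - 1 + (J - N + M) div 2}. {t - (N - J - 1)..M - 1 - t})
      \<subseteq> {0..N} \<times> {0..N}"
    using MNJ by (auto simp: less_eq_div_iff_mult_less_eq)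
  show ?thesis
    unfolding Let_def M_def[symmetric] N_def[symmetric] J_def[symmetric] card
      sum_nested_eq_sum_square[OF fin R1] sum_nested_eq_sum_square[OF fin R2]
      sum_nested_eq_sum_square[OF fin R3] trans[OF sum_nested_eq_sum_square[OF fin R4] sum.swap]
    unfolding refl_total_def N_def[symmetric] sum.distrib[symmetric]
    by (intro sum.cong refl refl_count_eq_regions) (use MNJ N_def in auto)
qed

end
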